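(* Consider an $N$-player discounted stochastic game with finite stage space $\mathcal{S}$, finite action sets $\mathcal{X}_i(s)$ for player $i$ at stage $s$, transition probabilities $\mathbb{P}(s'\mid s,\mathbf{x})$, discount factor $\gamma\in(0,1)$, and polymatrix stage payoffs $M_i(\mathbf{x},s)=\sum_{j\in[N],j\ne i}x_i(s)^TA^{ij}(s)x_j(s)$, where each $A^{ij}(s)$ is only known to lie in an uncertainty set $\mathcal{U}^{ij}(s)$. Form the associated agent game, and suppose the agent game has an ex-post equilibrium $(a^*(i,s))_{i\in[N],s\in\mathcal{S}}$. Define $x_i^*(s)=a^*(i,s)$ for each player $i$ and stage $s$. Then $(x_i^*(s))_{i\in[N],s\in\mathcal{S}}$ is an ex-post Markov perfect equilibrium (ex-post MPE) of the stochastic game.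
   Context: In the stochastic game, play starts at an initial stage $s^0$; at each time $t$ all players simultaneously choose (possibly mixed) actions, where player $i$'s action $x_i(s^t,\mathcal{H}^t)\in\mathcal{X}_i(s^t)$ may depend on the history $\mathcal{H}^t$ of past stages and actions; stage payoffs are realized and the next stage is drawn from $\mathbb{P}(\cdot\mid s^t,\mathbf{x})$. (Mixed actions at stage $s$ are identified with probability vectors over $\mathcal{X}_i(s)$, and $x_i(s)^TA^{ij}(s)x_j(s)$ is the expected stage payoff.) Player $i$'s expected discounted payoff from initial stage $s^0$ is $\Pi_i(x_1,\dots,x_N;s^0)=\mathbb{E}\big[\sum_{t=0}^\infty\gamma^tM_i(x_1(s^t,\mathcal{H}^t),\dots,x_N(s^t,\mathcal{H}^t);s^t)\big]$. A Markov strategy depends only on the current stage, written $x_i(s)$. A profile of Markov strategies $(x_1^*(s),\dots,x_N^*(s))$ is an ex-post MPE if for every choice of payoff matrices $A^{ij}(s)\in\mathcal{U}^{ij}(s)$ (all $i,j\in[N]$, $s\in\mathcal{S}$), every player $i$ and every initial stage $s$, the strategy $x_i^*$ maximizes $\Pi_i(x_i,x_{-i}^*;s)$ over player $i$'s strategies, given the others play $x_{-i}^*$. The agent game is the one-shot game with one player ("agent") $(i,s)$ for each $i\in[N]$, $s\in\mathcal{S}$, whose action set is $\mathcal{X}_i(s)$; for an action profile $\mathbf{a}=(a(i,s))_{i,s}$ the payoff to agent $(i,s)$ is $Q_{i,s}(\mathbf{a})=\mathbb{E}\big[\sum_{t=0}^\infty\gamma^tM_i(a(1,s^t),\dots,a(N,s^t);s^t)\mid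 s^0=s\big]$, which depends on the uncertain matrices $A^{ij}(\cdot)$. An ex-post equilibrium of the agent game is a profile $\mathbf{a}^*$ such that for every agent $(i,s)$ and every choice of $A^{ij}(s')\in\mathcal{U}^{ij}(s')$ for all $i,j,s'$, $a^*(i,s)$ maximizes $Q_{i,s}(a(i,s),\mathbf{a}^*_{-(i,s)})$ over $a(i,s)$. *)

theory Defs
  imports "HOL-Probability.Probability"
begin

(* Conventions:
   players are 0..N-1; stages form a finite type 's; actions are elements of a type 'a,
   player i's action set at stage s is X i s :: 'a set.
   A mixed action of player i at stage s is a pmf p with set_pmf p \<subseteq> X i s
   (= a probability vector over X i s).
   A i j s :: 'a \<Rightarrow> 'a \<Rightarrow> real is the payoff matrix A^{ij}(s), indexed by actions.
   P s a :: 's pmf is the transition law given the stage s and a pure action profile a;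
   for mixed profiles it is extended multilinearly (product distribution). *)

type_synonym ('s, 'a) hist = "('s \<times> (nat \<Rightarrow> 'a)) list"

definition mixed_on :: "'a set \<Rightarrow> 'a pmf \<Rightarrow> bool" where
  "mixed_on Y p \<longleftrightarrow> set_pmf p \<subseteq> Y"

definition stage_payoff ::
  "nat \<Rightarrow> (nat \<Rightarrow> 's \<Rightarrow> 'a set) \<Rightarrow> (nat \<Rightarrow> nat \<Rightarrow> 's \<Rightarrow> 'a \<Rightarrow> 'a \<Rightarrow> real)
   \<Rightarrow> nat \<Rightarrow> (nat \<Rightarrow> 'a pmf) \<Rightarrow> 's \<Rightarrow> real" where
  "stage_payoff N X A i x s =
     (\<Sum>j\<in>{..<N} - {i}. \<Sum>a\<in>X i s. \<Sum>b\<in>X j s. pmf (x i) a * A i j s a b * pmf (x j) b)"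

definition profile_pmf :: "nat \<Rightarrow> (nat \<Rightarrow> 'h \<Rightarrow> 's \<Rightarrow> 'a pmf) \<Rightarrow> 'h \<Rightarrow> 's \<Rightarrow> (nat \<Rightarrow> 'a) pmf" where
  "profile_pmf N \<sigma> h s = Pi_pmf {..<N} undefined (\<lambda>j. \<sigma> j h s)"

text \<open>The history records past stages and realised pure action profiles.\<close>
fun disc_val ::
  "nat \<Rightarrow> (nat \<Rightarrow> 's \<Rightarrow> 'a set) \<Rightarrow> ('s \<Rightarrow> (nat \<Rightarrow> 'a) \<Rightarrow> 's pmf) \<Rightarrow> real
   \<Rightarrow> (nat \<Rightarrow> nat \<Rightarrow> 's \<Rightarrow> 'a \<Rightarrow> 'a \<Rightarrow> real)
   \<Rightarrow> (nat \<Rightarrow> ('s, 'a) hist \<Rightarrow> 's \<Rightarrow> 'a pmf) \<Rightarrow> nat \<Rightarrow> nat \<Rightarrow> ('s, 'a) hist \<Rightarrow> 's \<Rightarrow> real" where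
  "disc_val N X P \<gamma> A \<sigma> i 0 h s = 0"
| "disc_val N X P \<gamma> A \<sigma> i (Suc T) h s =
     stage_payoff N X A i (\<lambda>j. \<sigma> j h s) s
     + \<gamma> * measure_pmf.expectation (profile_pmf N \<sigma> h s)
             (\<lambda>a. measure_pmf.expectation (P s a)
                    (\<lambda>s'. disc_val N X P \<gamma> A \<sigma> i T (h @ [(s, a)]) s'))"

definition disc_payoff ::
  "nat \<Rightarrow> (nat \<Rightarrow> 's \<Rightarrow> 'a set) \<Rightarrow> ('s \<Rightarrow> (nat \<Rightarrow> 'a) \<Rightarrow> 's pmf) \<Rightarrow> real
   \<Rightarrow> (nat \<Rightarrow> nat \<Rightarrow> 's \<Rightarrow> 'a \<Rightarrow> 'a \<Rightarrow> real)
   \<Rightarrow> (nat \<Rightarrow> ('s, 'a) hist \<Rightarrow> 's \<Rightarrow> 'a pmf) \<Rightarrow> nat \<Rightarrow> 's \<Rightarrow> real" where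
  "disc_payoff N X P \<gamma> A \<sigma> i s0 = lim (\<lambda>T. disc_val N X P \<gamma> A \<sigma> i T [] s0)"

definition is_strategy :: "(nat \<Rightarrow> 's \<Rightarrow> 'a set) \<Rightarrow> nat \<Rightarrow> (('s, 'a) hist \<Rightarrow> 's \<Rightarrow> 'a pmf) \<Rightarrow> bool" where
  "is_strategy X i \<sigma>i \<longleftrightarrow> (\<forall>h s. mixed_on (X i s) (\<sigma>i h s))"

definition markov :: "(nat \<Rightarrow> 's \<Rightarrow> 'a pmf) \<Rightarrow> (nat \<Rightarrow> ('s, 'a) hist \<Rightarrow> 's \<Rightarrow> 'a pmf)" where
  "markov x = (\<lambda>i h s. x i s)"

definition admissible ::
  "nat \<Rightarrow> (nat \<Rightarrow> nat \<Rightarrow> 's \<Rightarrow> ('a \<Rightarrow> 'a \<Rightarrow> real) set) \<Rightarrow> (nat \<Rightarrow> nat \<Rightarrow> 's \<Rightarrow> 'a \<Rightarrow> 'a \<Rightarrow> real) \<Rightarrow> bool" where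
  "admissible N U A \<longleftrightarrow> (\<forall>i<N. \<forall>j<N. \<forall>s. A i j s \<in> U i j s)"

definition expost_MPE ::
  "nat \<Rightarrow> (nat \<Rightarrow> 's \<Rightarrow> 'a set) \<Rightarrow> ('s \<Rightarrow> (nat \<Rightarrow> 'a) \<Rightarrow> 's pmf) \<Rightarrow> real
   \<Rightarrow> (nat \<Rightarrow> nat \<Rightarrow> 's \<Rightarrow> ('a \<Rightarrow> 'a \<Rightarrow> real) set) \<Rightarrow> (nat \<Rightarrow> 's \<Rightarrow> 'a pmf) \<Rightarrow> bool" where
  "expost_MPE N X P \<gamma> U x \<longleftrightarrow>
     (\<forall>i<N. \<forall>s. mixed_on (X i s) (x i s)) \<and>
     (\<forall>A. admissible N U A \<longrightarrow>
        (\<forall>i<N. \<forall>s. \<forall>\<sigma>i. is_strategy X i \<sigma>i \<longrightarrow>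
           disc_payoff N X P \<gamma> A ((markov x)(i := \<sigma>i)) i s \<le> disc_payoff N X P \<gamma> A (markov x) i s))"

text \<open>Agent game: agent (i,s) chooses a(i,s); its payoff Q_{i,s}(a) is the discounted payoff
  of player i from initial stage s when every player j plays a(j,s') at every stage s'.\<close>
definition agent_payoff ::
  "nat \<Rightarrow> (nat \<Rightarrow> 's \<Rightarrow> 'a set) \<Rightarrow> ('s \<Rightarrow> (nat \<Rightarrow> 'a) \<Rightarrow> 's pmf) \<Rightarrow> real
   \<Rightarrow> (nat \<Rightarrow> nat \<Rightarrow> 's \<Rightarrow> 'a \<Rightarrow> 'a \<Rightarrow> real) \<Rightarrow> (nat \<Rightarrow> 's \<Rightarrow> 'a pmf) \<Rightarrow> nat \<Rightarrow> 's \<Rightarrow> real" where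
  "agent_payoff N X P \<gamma> A a i s = disc_payoff N X P \<gamma> A (markov a) i s"

definition agent_expost_eq ::
  "nat \<Rightarrow> (nat \<Rightarrow> 's \<Rightarrow> 'a set) \<Rightarrow> ('s \<Rightarrow> (nat \<Rightarrow> 'a) \<Rightarrow> 's pmf) \<Rightarrow> real
   \<Rightarrow> (nat \<Rightarrow> nat \<Rightarrow> 's \<Rightarrow> ('a \<Rightarrow> 'a \<Rightarrow> real) set) \<Rightarrow> (nat \<Rightarrow> 's \<Rightarrow> 'a pmf) \<Rightarrow> bool" where
  "agent_expost_eq N X P \<gamma> U a \<longleftrightarrow>
     (\<forall>i<N. \<forall>s. mixed_on (X i s) (a i s)) \<and>
     (\<forall>A. admissible N U A \<longrightarrow>
        (\<forall>i<N. \<forall>s. \<forall>\<alpha>. mixed_on (X i s) \<alpha> \<longrightarrow>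
           agent_payoff N X P \<gamma> A (a(i := (a i)(s := \<alpha>))) i s \<le> agent_payoff N X P \<gamma> A a i s))"

end

theory Submission
  imports Defs
begin

(* One-shot deviation principle. For a Markov profile x, player i's discounted payoff V_x is
   a fixed point of the Bellman equation V_x(s) = r(x(s), s) + \<gamma> E[V_x(s')].
   Suppose some mixed action \<alpha> at a stage s0, followed by continuation values V_x, beat V_x(s0).
   Changing only agent (i, s0) to \<alpha> gives a profile y with V_x \<le> r(y(s), s) + \<gamma> E[V_x(s')]
   everywhere, strictly at s0; then w = V_y - V_x dominates its own discounted expectation,
   so its minimum over the finitely many stages is nonnegative, and V_y(s0) > V_x(s0),
   contradicting the agent-game equilibrium. Hence no one-stage deviation is profitable, and
   iterating this bounds the T-period payoff of any history-dependent deviation of player i by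
   V_x + O(\<gamma>^T). *)

lemma integrable_measure_pmf_bounded:
  fixes f :: "'b \<Rightarrow> real"
  assumes "\<And>x. \<bar>f x\<bar> \<le> c"
  shows "integrable (measure_pmf p) f"
  by (rule measure_pmf.integrable_const_bound[where B = c]) (auto simp: assms)

lemma abs_expectation_pmf_le:
  fixes f :: "'b \<Rightarrow> real"
  assumes "\<And>x. \<bar>f x\<bar> \<le> c"
  shows "\<bar>measure_pmf.expectation p f\<bar> \<le> c"
proof -
  have "\<bar>measure_pmf.expectation p f\<bar> \<le> measure_pmf.expectation p (\<lambda>x. \<bar>f x\<bar>)"
    by (rule integral_abs_bound)
  also have "\<dots> \<le> measure_pmf.expectation p (\<lambda>_. c)"
    using assms by (intro integral_mono integrable_measure_pmf_bounded[where c = c])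
      (auto intro: order_trans[OF abs_ge_zero])
  also have "\<dots> = c"
    by simp
  finally show ?thesis .
qed

lemma expectation_pmf_mono:
  fixes f g :: "'b \<Rightarrow> real"
  assumes "\<And>x. \<bar>f x\<bar> \<le> c" and "\<And>x. \<bar>g x\<bar> \<le> d" and "\<And>x. f x \<le> g x"
  shows "measure_pmf.expectation p f \<le> measure_pmf.expectation p g"
  using assms by (intro integral_mono integrable_measure_pmf_bounded) auto

lemma expectation_pmf_diff:
  fixes f g :: "'b \<Rightarrow> real"
  assumes "\<And>x. \<bar>f x\<bar> \<le> c" and "\<And>x. \<bar>g x\<bar> \<le> d"
  shows "measure_pmf.expectation p f - measure_pmf.expectation p g
    = measure_pmf.expectation p (\<lambda>x. f x - g x)"
  by (rule Bochner_Integration.integral_diff[symmetric])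
    (rule integrable_measure_pmf_bounded, rule assms)+

lemma expectation_pmf_add_const:
  fixes f :: "'b \<Rightarrow> real"
  assumes "\<And>x. \<bar>f x\<bar> \<le> c"
  shows "measure_pmf.expectation p (\<lambda>x. f x + d) = measure_pmf.expectation p f + d"
  by (simp add: Bochner_Integration.integral_add integrable_measure_pmf_bounded[OF assms])

definition next_expectation ::
  "(nat \<Rightarrow> 'a) pmf \<Rightarrow> ('s \<Rightarrow> (nat \<Rightarrow> 'a) \<Rightarrow> 's pmf) \<Rightarrow> 's \<Rightarrow> ((nat \<Rightarrow> 'a) \<Rightarrow> 's \<Rightarrow> real) \<Rightarrow> real" where
  "next_expectation p P s f =
     measure_pmf.expectation p (\<lambda>a. measure_pmf.expectation (P s a) (f a))"

lemma abs_next_expectation_le: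
  assumes "\<And>a s'. \<bar>f a s'\<bar> \<le> c"
  shows "\<bar>next_expectation p P s f\<bar> \<le> c"
  unfolding next_expectation_def by (intro abs_expectation_pmf_le assms)

lemma next_expectation_mono:
  assumes "\<And>a s'. \<bar>f a s'\<bar> \<le> c" and "\<And>a s'. \<bar>g a s'\<bar> \<le> d"
    and "\<And>a s'. f a s' \<le> g a s'"
  shows "next_expectation p P s f \<le> next_expectation p P s g"
  unfolding next_expectation_def
proof (rule expectation_pmf_mono[where c = c and d = d])
  fix a
  show "\<bar>measure_pmf.expectation (P s a) (f a)\<bar> \<le> c"
    by (rule abs_expectation_pmf_le) (rule assms)
  show "\<bar>measure_pmf.expectation (P s a) (g a)\<bar> \<le> d"
    by (rule abs_expectation_pmf_le) (rule assms)
  show "measure_pmf.expectation (P s a) (f a) \<le> measure_pmf.expectation (P s a) (g a)"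
    by (rule expectation_pmf_mono) (rule assms)+
qed

lemma next_expectation_diff:
  assumes "\<And>a s'. \<bar>f a s'\<bar> \<le> c" and "\<And>a s'. \<bar>g a s'\<bar> \<le> d"
  shows "next_expectation p P s f - next_expectation p P s g
    = next_expectation p P s (\<lambda>a s'. f a s' - g a s')"
proof -
  have inner: "measure_pmf.expectation (P s a) (f a) - measure_pmf.expectation (P s a) (g a)
    = measure_pmf.expectation (P s a) (\<lambda>s'. f a s' - g a s')" for a
    by (rule expectation_pmf_diff) (rule assms)+
  have "next_expectation p P s f - next_expectation p P s g
    = measure_pmf.expectation p
        (\<lambda>a. measure_pmf.expectation (P s a) (f a) - measure_pmf.expectation (P s a) (g a))"
    unfolding next_expectation_def
    by (rule expectation_pmf_diff) (rule abs_expectation_pmf_le, rule assms)+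
  also have "\<dots> = next_expectation p P s (\<lambda>a s'. f a s' - g a s')"
    by (simp add: inner next_expectation_def)
  finally show ?thesis .
qed

lemma next_expectation_add_const:
  assumes "\<And>a s'. \<bar>f a s'\<bar> \<le> c"
  shows "next_expectation p P s (\<lambda>a s'. f a s' + d) = next_expectation p P s f + d"
  unfolding next_expectation_def
  by (simp add: expectation_pmf_add_const[where c = c] abs_expectation_pmf_le assms)

lemma nonneg_if_ge_discounted_next_expectation:
  fixes w :: "'s::finite \<Rightarrow> real"
  assumes "0 \<le> \<gamma>" and "\<gamma> < 1"
    and sub: "\<And>s. \<gamma> * next_expectation (p s) P s (\<lambda>_. w) \<le> w s"
  shows "0 \<le> w s"
proof -
  define m where "m = Min (range w)"
  have m_le: "m \<le> w s" for s
    unfolding m_def by simp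
  have "m \<in> range w"
    unfolding m_def by (rule Min_in) auto
  then obtain s\<^sub>0 where "w s\<^sub>0 = m"
    by auto
  have "next_expectation (p s\<^sub>0) P s\<^sub>0 (\<lambda>_ _. m) \<le> next_expectation (p s\<^sub>0) P s\<^sub>0 (\<lambda>_. w)"
    by (rule next_expectation_mono[where c = "\<bar>m\<bar>" and d = "Max (range (\<lambda>s. \<bar>w s\<bar>))"])
      (simp_all add: m_le)
  then have "m \<le> next_expectation (p s\<^sub>0) P s\<^sub>0 (\<lambda>_. w)"
    by (simp add: next_expectation_def)
  then have "\<gamma> * m \<le> \<gamma> * next_expectation (p s\<^sub>0) P s\<^sub>0 (\<lambda>_. w)"
    using \<open>0 \<le> \<gamma>\<close> by (rule mult_left_mono)
  also have "\<dots> \<le> m"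
    using sub[of s\<^sub>0] \<open>w s\<^sub>0 = m\<close> by simp
  finally have "0 \<le> (1 - \<gamma>) * m"
    by (simp add: algebra_simps)
  with \<open>\<gamma> < 1\<close> have "0 \<le> m"
    by (simp add: zero_le_mult_iff)
  with m_le[of s] show ?thesis
    by linarith
qed

lemma abs_stage_payoff_le:
  "\<bar>stage_payoff N X A i x s\<bar> \<le> (\<Sum>j\<in>{..<N} - {i}. \<Sum>a\<in>X i s. \<Sum>b\<in>X j s. \<bar>A i j s a b\<bar>)"
  unfolding stage_payoff_def
proof (intro order.trans[OF sum_abs] sum_mono order.trans[OF sum_abs])
  fix j a b
  have "\<bar>pmf (x i) a * A i j s a b * pmf (x j) b\<bar> = pmf (x i) a * \<bar>A i j s a b\<bar> * pmf (x j) b"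
    by (simp add: abs_mult)
  also have "\<dots> \<le> 1 * \<bar>A i j s a b\<bar> * 1"
    by (intro mult_mono) (auto simp: pmf_le_1)
  finally show "\<bar>pmf (x i) a * A i j s a b * pmf (x j) b\<bar> \<le> \<bar>A i j s a b\<bar>"
    by simp
qed

lemma nonpos_if_le_geometric:
  fixes x c \<gamma> :: real
  assumes "0 \<le> \<gamma>" and "\<gamma> < 1" and "\<And>T. x \<le> c * \<gamma> ^ T"
  shows "x \<le> 0"
proof -
  have "(\<lambda>T. c * \<gamma> ^ T) \<longlonglongrightarrow> 0"
    using assms by (intro tendsto_mult_right_zero LIMSEQ_power_zero) auto
  then show ?thesis
    by (rule LIMSEQ_le_const) (use assms in auto)
qed

lemma markov_apply: "(\<lambda>j. markov x j h s) = (\<lambda>j. x j s)"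
  by (simp add: markov_def)

lemma profile_pmf_markov: "profile_pmf N (markov x) h s = Pi_pmf {..<N} undefined (\<lambda>j. x j s)"
  by (simp add: profile_pmf_def markov_def)

context
  fixes N :: nat and X :: "nat \<Rightarrow> 's::finite \<Rightarrow> 'a set"
    and P :: "'s \<Rightarrow> (nat \<Rightarrow> 'a) \<Rightarrow> 's pmf" and \<gamma> :: real
    and A :: "nat \<Rightarrow> nat \<Rightarrow> 's \<Rightarrow> 'a \<Rightarrow> 'a \<Rightarrow> real" and i :: nat
  assumes discount: "0 < \<gamma>" "\<gamma> < 1"
begin

abbreviation horizon_value where
  "horizon_value \<sigma> T h s \<equiv> disc_val N X P \<gamma> A \<sigma> i T h s"

abbreviation markov_value where
  "markov_value y s \<equiv> disc_payoff N X P \<gamma> A (markov y) i s"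

definition payoff_bound :: real where
  "payoff_bound = (\<Sum>s\<in>UNIV. \<Sum>j\<in>{..<N} - {i}. \<Sum>a\<in>X i s. \<Sum>b\<in>X j s. \<bar>A i j s a b\<bar>)"

definition value_bound :: real where
  "value_bound = payoff_bound / (1 - \<gamma>)"

lemma abs_stage_payoff_le_payoff_bound: "\<bar>stage_payoff N X A i x s\<bar> \<le> payoff_bound"
proof -
  note abs_stage_payoff_le
  also have "(\<Sum>j\<in>{..<N} - {i}. \<Sum>a\<in>X i s. \<Sum>b\<in>X j s. \<bar>A i j s a b\<bar>) \<le> payoff_bound"
    unfolding payoff_bound_def by (rule member_le_sum) (auto intro!: sum_nonneg)
  finally show ?thesis .
qed

lemma value_bound_nonneg: "0 \<le> value_bound"
  using discount unfolding value_bound_def payoff_bound_def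
  by (auto intro!: divide_nonneg_pos sum_nonneg)

lemma payoff_bound_add_discounted_value_bound: "payoff_bound + \<gamma> * value_bound = value_bound"
  using discount unfolding value_bound_def by (simp add: field_simps)

lemma horizon_value_Suc:
  "horizon_value \<sigma> (Suc T) h s = stage_payoff N X A i (\<lambda>j. \<sigma> j h s) s
     + \<gamma> * next_expectation (profile_pmf N \<sigma> h s) P s (\<lambda>a. horizon_value \<sigma> T (h @ [(s, a)]))"
  by (simp add: next_expectation_def)

lemma abs_horizon_value_le: "\<bar>horizon_value \<sigma> T h s\<bar> \<le> value_bound"
proof (induction T arbitrary: h s)
  case 0
  show ?case
    using value_bound_nonneg by simp
next
  case (Suc T)
  have "\<bar>\<gamma> * next_expectation (profile_pmf N \<sigma> h s) P s (\<lambda>a. horizon_value \<sigma> T (h @ [(s, a)]))\<bar>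
    \<le> \<gamma> * value_bound"
    using abs_next_expectation_le[OF Suc.IH] discount by (simp add: abs_mult mult_left_mono)
  then have "\<bar>horizon_value \<sigma> (Suc T) h s\<bar> \<le> payoff_bound + \<gamma> * value_bound"
    unfolding horizon_value_Suc
    by (rule order_trans[OF abs_triangle_ineq add_mono[OF abs_stage_payoff_le_payoff_bound]])
  then show ?case
    by (simp only: payoff_bound_add_discounted_value_bound)
qed

lemma abs_horizon_value_diff_le:
  "T \<le> n \<Longrightarrow> \<bar>horizon_value \<sigma> n h s - horizon_value \<sigma> T h s\<bar> \<le> \<gamma> ^ T * value_bound"
proof (induction T arbitrary: n h s)
  case 0
  show ?case
    using abs_horizon_value_le by simp
next
  case (Suc T)
  then obtain n' where n: "n = Suc n'" and "T \<le> n'"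
    by (cases n) auto
  let ?E = "next_expectation (profile_pmf N \<sigma> h s) P s"
  have "horizon_value \<sigma> n h s - horizon_value \<sigma> (Suc T) h s
    = \<gamma> * (?E (\<lambda>a. horizon_value \<sigma> n' (h @ [(s, a)])) - ?E (\<lambda>a. horizon_value \<sigma> T (h @ [(s, a)])))"
    unfolding n horizon_value_Suc by (simp add: algebra_simps)
  also have "\<dots> = \<gamma> * ?E (\<lambda>a s'.
      horizon_value \<sigma> n' (h @ [(s, a)]) s' - horizon_value \<sigma> T (h @ [(s, a)]) s')"
    by (simp add: next_expectation_diff[where c = value_bound and d = value_bound]
        abs_horizon_value_le)
  also have "\<bar>\<dots>\<bar> \<le> \<gamma> * (\<gamma> ^ T * value_bound)"
    using abs_next_expectation_le[OF Suc.IH[OF \<open>T \<le> n'\<close>]] discount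
    by (simp add: abs_mult mult_left_mono)
  finally show ?case
    by (simp add: mult.assoc)
qed

lemma horizon_value_convergent: "convergent (\<lambda>T. horizon_value \<sigma> T h s)"
proof (rule Cauchy_convergent, rule CauchyI)
  fix e :: real
  assume "0 < e"
  have "(\<lambda>T. \<gamma> ^ T * value_bound) \<longlonglongrightarrow> 0"
    using discount by (intro tendsto_mult_left_zero LIMSEQ_power_zero) auto
  then have "\<forall>\<^sub>F T in sequentially. \<gamma> ^ T * value_bound < e / 2"
    using \<open>0 < e\<close> by (intro order_tendstoD(2)) auto
  then obtain M where M: "\<gamma> ^ M * value_bound < e / 2"
    unfolding eventually_sequentially by blast
  show "\<exists>M. \<forall>m\<ge>M. \<forall>n\<ge>M. norm (horizon_value \<sigma> m h s - horizon_value \<sigma> n h s) < e"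
  proof (intro exI allI impI)
    fix m n
    assume "M \<le> m" "M \<le> n"
    have "\<bar>horizon_value \<sigma> m h s - horizon_value \<sigma> M h s\<bar> \<le> \<gamma> ^ M * value_bound"
      using \<open>M \<le> m\<close> by (rule abs_horizon_value_diff_le)
    moreover have "\<bar>horizon_value \<sigma> n h s - horizon_value \<sigma> M h s\<bar> \<le> \<gamma> ^ M * value_bound"
      using \<open>M \<le> n\<close> by (rule abs_horizon_value_diff_le)
    ultimately show "norm (horizon_value \<sigma> m h s - horizon_value \<sigma> n h s) < e"
      using M unfolding real_norm_def abs_le_iff abs_less_iff by linarith
  qed
qed

lemma abs_disc_payoff_diff_horizon_value_le:
  "\<bar>disc_payoff N X P \<gamma> A \<sigma> i s - horizon_value \<sigma> T [] s\<bar> \<le> \<gamma> ^ T * value_bound"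
proof -
  have "(\<lambda>n. \<bar>horizon_value \<sigma> n [] s - horizon_value \<sigma> T [] s\<bar>)
    \<longlonglongrightarrow> \<bar>disc_payoff N X P \<gamma> A \<sigma> i s - horizon_value \<sigma> T [] s\<bar>"
    unfolding disc_payoff_def
    using horizon_value_convergent by (intro tendsto_intros) (simp add: convergent_LIMSEQ_iff)
  then show ?thesis
    by (rule LIMSEQ_le_const2) (use abs_horizon_value_diff_le in blast)
qed

lemma abs_markov_value_le: "\<bar>markov_value y s\<bar> \<le> value_bound"
  using abs_disc_payoff_diff_horizon_value_le[of "markov y" s 0] by simp

lemma horizon_value_markov_history_indep:
  "horizon_value (markov y) T h s = horizon_value (markov y) T [] s"
proof (induction T arbitrary: h s)
  case 0
  show ?case
    by simp
next
  case (Suc T)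
  have "horizon_value (markov y) T (h @ [(s, a)]) = horizon_value (markov y) T ([] @ [(s, a)])"
    for a
    using Suc.IH by (metis ext)
  then show ?case
    by (simp only: horizon_value_Suc profile_pmf_markov markov_apply)
qed

lemma horizon_value_markov_Suc:
  "horizon_value (markov y) (Suc T) h s = stage_payoff N X A i (\<lambda>j. y j s) s
     + \<gamma> * next_expectation (Pi_pmf {..<N} undefined (\<lambda>j. y j s)) P s
         (\<lambda>_. horizon_value (markov y) T [])"
proof -
  have "horizon_value (markov y) T (h @ [(s, a)]) = horizon_value (markov y) T []" for a
    by (rule ext) (rule horizon_value_markov_history_indep)
  then show ?thesis
    by (simp only: horizon_value_Suc profile_pmf_markov markov_apply)
qed

definition one_shot_payoff :: "(nat \<Rightarrow> 's \<Rightarrow> 'a pmf) \<Rightarrow> (nat \<Rightarrow> 'a pmf) \<Rightarrow> 's \<Rightarrow> real" where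
  "one_shot_payoff y q s = stage_payoff N X A i q s
     + \<gamma> * next_expectation (Pi_pmf {..<N} undefined q) P s (\<lambda>_. markov_value y)"

lemma markov_value_eq_one_shot_payoff: "markov_value y s = one_shot_payoff y (\<lambda>j. y j s) s"
proof -
  let ?E = "next_expectation (Pi_pmf {..<N} undefined (\<lambda>j. y j s)) P s"
  have "\<bar>one_shot_payoff y (\<lambda>j. y j s) s - markov_value y s\<bar> \<le> (2 * \<gamma> * value_bound) * \<gamma> ^ T"
    for T
  proof -
    have "one_shot_payoff y (\<lambda>j. y j s) s - horizon_value (markov y) (Suc T) [] s
      = \<gamma> * (?E (\<lambda>_. markov_value y) - ?E (\<lambda>_. horizon_value (markov y) T []))"
      unfolding one_shot_payoff_def horizon_value_markov_Suc by (simp add: algebra_simps)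
    also have "\<dots> = \<gamma> * ?E (\<lambda>_ s'. markov_value y s' - horizon_value (markov y) T [] s')"
      by (simp add: next_expectation_diff[where c = value_bound and d = value_bound]
          abs_markov_value_le abs_horizon_value_le)
    also have "\<bar>\<dots>\<bar> \<le> \<gamma> * (\<gamma> ^ T * value_bound)"
      using abs_next_expectation_le[OF abs_disc_payoff_diff_horizon_value_le] discount
      by (simp add: abs_mult mult_left_mono)
    finally have "\<bar>one_shot_payoff y (\<lambda>j. y j s) s - horizon_value (markov y) (Suc T) [] s\<bar>
      \<le> \<gamma> * (\<gamma> ^ T * value_bound)" .
    moreover have "\<bar>markov_value y s - horizon_value (markov y) (Suc T) [] s\<bar>
      \<le> \<gamma> * (\<gamma> ^ T * value_bound)"
      using abs_disc_payoff_diff_horizon_value_le[of "markov y" s "Suc T"]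
      by (simp only: power_Suc mult.assoc)
    ultimately have "\<bar>one_shot_payoff y (\<lambda>j. y j s) s - markov_value y s\<bar>
      \<le> 2 * (\<gamma> * (\<gamma> ^ T * value_bound))"
      unfolding abs_le_iff by linarith
    then show ?thesis
      by (simp add: mult_ac)
  qed
  then have "\<bar>one_shot_payoff y (\<lambda>j. y j s) s - markov_value y s\<bar> \<le> 0"
    using discount by (intro nonpos_if_le_geometric[of \<gamma>]) auto
  then show ?thesis
    by simp
qed

lemma one_shot_payoff_diff:
  "one_shot_payoff y q s - one_shot_payoff x q s
    = \<gamma> * next_expectation (Pi_pmf {..<N} undefined q) P s
        (\<lambda>_ s'. markov_value y s' - markov_value x s')"
proof -
  let ?E = "next_expectation (Pi_pmf {..<N} undefined q) P s"
  have "one_shot_payoff y q s - one_shot_payoff x q s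
    = \<gamma> * (?E (\<lambda>_. markov_value y) - ?E (\<lambda>_. markov_value x))"
    unfolding one_shot_payoff_def by (simp add: algebra_simps)
  also have "\<dots> = \<gamma> * ?E (\<lambda>_ s'. markov_value y s' - markov_value x s')"
    by (simp add: next_expectation_diff[where c = value_bound and d = value_bound]
        abs_markov_value_le)
  finally show ?thesis .
qed

lemma policy_improvement:
  assumes improves: "\<And>s. markov_value x s \<le> one_shot_payoff x (\<lambda>j. y j s) s"
  shows "one_shot_payoff x (\<lambda>j. y j s) s \<le> markov_value y s"
proof -
  define w where "w s = markov_value y s - markov_value x s" for s
  let ?E = "\<lambda>s. next_expectation (Pi_pmf {..<N} undefined (\<lambda>j. y j s)) P s (\<lambda>_. w)"
  have w_bound: "\<bar>w s\<bar> \<le> 2 * value_bound" for s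
    using abs_markov_value_le[of y s] abs_markov_value_le[of x s] unfolding w_def by simp
  have w_eq: "w s = \<gamma> * ?E s + (one_shot_payoff x (\<lambda>j. y j s) s - markov_value x s)" for s
    using markov_value_eq_one_shot_payoff[of y s] one_shot_payoff_diff[of y "\<lambda>j. y j s" s x]
    unfolding w_def by simp
  have "\<gamma> * ?E s \<le> w s" for s
    using w_eq[of s] improves[of s] by linarith
  then have "0 \<le> w s" for s
    using discount by (intro nonneg_if_ge_discounted_next_expectation[where P = P]) auto
  then have "next_expectation (Pi_pmf {..<N} undefined (\<lambda>j. y j s)) P s (\<lambda>_ _. 0) \<le> ?E s"
    by (intro next_expectation_mono[where c = 0 and d = "2 * value_bound"] w_bound) auto
  then have "0 \<le> \<gamma> * ?E s"
    using discount by (simp add: next_expectation_def)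
  with w_eq[of s] show ?thesis
    unfolding w_def by linarith
qed

lemma one_shot_payoff_le_markov_value:
  assumes agent_opt: "\<And>s \<alpha>. mixed_on (X i s) \<alpha> \<Longrightarrow>
      markov_value (x(i := (x i)(s := \<alpha>))) s \<le> markov_value x s"
    and "mixed_on (X i s\<^sub>0) \<alpha>"
  shows "one_shot_payoff x ((\<lambda>j. x j s\<^sub>0)(i := \<alpha>)) s\<^sub>0 \<le> markov_value x s\<^sub>0"
proof (rule ccontr)
  assume "\<not> ?thesis"
  define y where "y = x(i := (x i)(s\<^sub>0 := \<alpha>))"
  have y_at: "(\<lambda>j. y j s) = (if s = s\<^sub>0 then (\<lambda>j. x j s\<^sub>0)(i := \<alpha>) else (\<lambda>j. x j s))" for s
    by (auto simp: y_def)
  with \<open>\<not> ?thesis\<close> have less_at: "markov_value x s\<^sub>0 < one_shot_payoff x (\<lambda>j. y j s\<^sub>0) s\<^sub>0"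
    by simp
  have "markov_value x s \<le> one_shot_payoff x (\<lambda>j. y j s) s" for s
    using less_at markov_value_eq_one_shot_payoff[of x s] y_at[of s] by (cases "s = s\<^sub>0") auto
  then have "one_shot_payoff x (\<lambda>j. y j s\<^sub>0) s\<^sub>0 \<le> markov_value y s\<^sub>0"
    by (rule policy_improvement)
  with less_at agent_opt[OF \<open>mixed_on (X i s\<^sub>0) \<alpha>\<close>] show False
    unfolding y_def by simp
qed

lemma horizon_value_deviation_le:
  assumes one_shot_opt: "\<And>s \<alpha>. mixed_on (X i s) \<alpha> \<Longrightarrow>
      one_shot_payoff x ((\<lambda>j. x j s)(i := \<alpha>)) s \<le> markov_value x s"
    and "is_strategy X i \<sigma>i"
  shows "horizon_value ((markov x)(i := \<sigma>i)) T h s \<le> markov_value x s + \<gamma> ^ T * value_bound"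
proof (induction T arbitrary: h s)
  case 0
  show ?case
    using abs_markov_value_le[of x s] by simp
next
  case (Suc T)
  let ?\<sigma> = "(markov x)(i := \<sigma>i)"
  let ?q = "(\<lambda>j. x j s)(i := \<sigma>i h s)"
  let ?E = "next_expectation (Pi_pmf {..<N} undefined ?q) P s"
  have q: "(\<lambda>j. ?\<sigma> j h s) = ?q"
    by (auto simp: markov_def)
  have tail_nonneg: "0 \<le> \<gamma> ^ T * value_bound"
    using discount value_bound_nonneg by simp
  have "?E (\<lambda>a. horizon_value ?\<sigma> T (h @ [(s, a)]))
    \<le> ?E (\<lambda>_ s'. markov_value x s' + \<gamma> ^ T * value_bound)"
  proof (rule next_expectation_mono[where c = value_bound
        and d = "value_bound + \<gamma> ^ T * value_bound"])
    fix a s'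
    show "\<bar>horizon_value ?\<sigma> T (h @ [(s, a)]) s'\<bar> \<le> value_bound"
      by (rule abs_horizon_value_le)
    show "\<bar>markov_value x s' + \<gamma> ^ T * value_bound\<bar> \<le> value_bound + \<gamma> ^ T * value_bound"
      using abs_markov_value_le[of x s'] tail_nonneg unfolding abs_le_iff by linarith
    show "horizon_value ?\<sigma> T (h @ [(s, a)]) s' \<le> markov_value x s' + \<gamma> ^ T * value_bound"
      by (rule Suc.IH)
  qed
  also have "\<dots> = ?E (\<lambda>_. markov_value x) + \<gamma> ^ T * value_bound"
    by (rule next_expectation_add_const) (rule abs_markov_value_le)
  finally have "\<gamma> * ?E (\<lambda>a. horizon_value ?\<sigma> T (h @ [(s, a)]))
    \<le> \<gamma> * (?E (\<lambda>_. markov_value x) + \<gamma> ^ T * value_bound)"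
    by (rule mult_left_mono) (use discount in simp)
  then have "horizon_value ?\<sigma> (Suc T) h s \<le> one_shot_payoff x ?q s + \<gamma> ^ Suc T * value_bound"
    unfolding horizon_value_Suc profile_pmf_def q one_shot_payoff_def by (simp add: algebra_simps)
  moreover have "one_shot_payoff x ?q s \<le> markov_value x s"
    using one_shot_opt \<open>is_strategy X i \<sigma>i\<close> by (simp add: is_strategy_def)
  ultimately show ?case
    by linarith
qed

lemma disc_payoff_deviation_le:
  assumes "\<And>s \<alpha>. mixed_on (X i s) \<alpha> \<Longrightarrow>
      one_shot_payoff x ((\<lambda>j. x j s)(i := \<alpha>)) s \<le> markov_value x s"
    and "is_strategy X i \<sigma>i"
  shows "disc_payoff N X P \<gamma> A ((markov x)(i := \<sigma>i)) i s \<le> markov_value x s"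
proof -
  have "disc_payoff N X P \<gamma> A ((markov x)(i := \<sigma>i)) i s - markov_value x s
    \<le> (2 * value_bound) * \<gamma> ^ T"
    for T
    using abs_disc_payoff_diff_horizon_value_le[of "(markov x)(i := \<sigma>i)" s T]
      horizon_value_deviation_le[OF assms, of T "[]" s]
    by (simp add: abs_le_iff algebra_simps)
  then have "disc_payoff N X P \<gamma> A ((markov x)(i := \<sigma>i)) i s - markov_value x s \<le> 0"
    using discount by (intro nonpos_if_le_geometric[of \<gamma>]) auto
  then show ?thesis
    by simp
qed

end

theorem theorem2:
  fixes N :: nat
    and X :: "nat \<Rightarrow> 's::finite \<Rightarrow> 'a set"
    and P :: "'s \<Rightarrow> (nat \<Rightarrow> 'a) \<Rightarrow> 's pmf"
    and \<gamma> :: real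
    and U :: "nat \<Rightarrow> nat \<Rightarrow> 's \<Rightarrow> ('a \<Rightarrow> 'a \<Rightarrow> real) set"
    and astar :: "nat \<Rightarrow> 's \<Rightarrow> 'a pmf"
  assumes "\<And>i s. i < N \<Longrightarrow> finite (X i s)"
    and "\<And>i s. i < N \<Longrightarrow> X i s \<noteq> {}"
    and "0 < \<gamma>" and "\<gamma> < 1"
    and "agent_expost_eq N X P \<gamma> U astar"
  shows "expost_MPE N X P \<gamma> U (\<lambda>i s. astar i s)"
proof -
  note discount = \<open>0 < \<gamma>\<close> \<open>\<gamma> < 1\<close>
  note agent_eq = \<open>agent_expost_eq N X P \<gamma> U astar\<close>[unfolded agent_expost_eq_def agent_payoff_def]
  have mixed: "\<forall>i<N. \<forall>s. mixed_on (X i s) (astar i s)"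
    using agent_eq by blast
  have agent_opt: "\<And>A i s \<alpha>. admissible N U A \<Longrightarrow> i < N \<Longrightarrow> mixed_on (X i s) \<alpha> \<Longrightarrow>
      disc_payoff N X P \<gamma> A (markov (astar(i := (astar i)(s := \<alpha>)))) i s
        \<le> disc_payoff N X P \<gamma> A (markov astar) i s"
    using agent_eq by blast
  have no_profitable_deviation:
    "disc_payoff N X P \<gamma> A ((markov astar)(i := \<sigma>i)) i s \<le> disc_payoff N X P \<gamma> A (markov astar) i s"
    if "admissible N U A" "i < N" "is_strategy X i \<sigma>i" for A i s \<sigma>i
    using disc_payoff_deviation_le[OF discount
        one_shot_payoff_le_markov_value[OF discount agent_opt[OF that(1,2)]] that(3)] .
  show ?thesis
    unfolding expost_MPE_def using mixed no_profitable_deviation by blast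
qed

end
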